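(* Let $W\in[0,1]^{k\times k}$ be a symmetric positive semidefinite matrix with unit diagonal, $\mu>0$, and consider linear utilities $u_i({\boldsymbol\theta})=W_i^\top{\boldsymbol\theta}$ ($W_i$ the $i$-th column of $W$) with thresholds $\mu_i=\mu$ and strategy space $\mathbb{R}_+^k$. Let ${\boldsymbol\theta}^{\mathrm{eq}}$ be an optimal stable equilibrium, $I=\{i:\theta^{\mathrm{eq}}_i=0\}$, and $\bar W,\bar{\boldsymbol\theta}^{\mathrm{eq}}$ the restrictions of $W$ (rows and columns) and ${\boldsymbol\theta}^{\mathrm{eq}}$ to $[k]\setminus I$. Then $\bar{\boldsymbol\theta}^{\mathrm{eq}}$ is an optimal solution of $\min_{\bf x}\{\mathbf{1}^\top{\bf x}:\bar W{\bf x}\ge\mu\mathbf{1},\ {\bf x}\ge\mathbf{0}\}$.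
   Context: ${\boldsymbol\theta}$ is feasible if $u_i({\boldsymbol\theta})\ge\mu$ for all $i$. A feasible ${\boldsymbol\theta}\in\mathbb{R}_+^k$ is a stable equilibrium if for no $i$ is there $0\le\theta_i'<\theta_i$ with $u_i(\theta_i',{\boldsymbol\theta}_{-i})\ge\mu$ (${\boldsymbol\theta}$ with $i$-th entry replaced). An optimal stable equilibrium minimizes $\mathbf{1}^\top{\boldsymbol\theta}$ among stable equilibria. *)

theory Defs
  imports "HOL-Analysis.Analysis"
begin

text \<open>Indices are 0..k-1; vectors in R^k are functions nat => real, only the values on
  {..<k} matter. The matrix W is nat => nat => real, W i j the (i,j) entry.\<close>

definition util :: "nat \<Rightarrow> (nat \<Rightarrow> nat \<Rightarrow> real) \<Rightarrow> nat \<Rightarrow> (nat \<Rightarrow> real) \<Rightarrow> real" where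
  "util k W i \<theta> = (\<Sum>j<k. W j i * \<theta> j)"

definition nonneg_vec :: "nat \<Rightarrow> (nat \<Rightarrow> real) \<Rightarrow> bool" where
  "nonneg_vec k \<theta> \<longleftrightarrow> (\<forall>i<k. \<theta> i \<ge> 0)"

definition feasible :: "nat \<Rightarrow> (nat \<Rightarrow> nat \<Rightarrow> real) \<Rightarrow> real \<Rightarrow> (nat \<Rightarrow> real) \<Rightarrow> bool" where
  "feasible k W \<mu> \<theta> \<longleftrightarrow> (\<forall>i<k. util k W i \<theta> \<ge> \<mu>)"

definition stable_eq :: "nat \<Rightarrow> (nat \<Rightarrow> nat \<Rightarrow> real) \<Rightarrow> real \<Rightarrow> (nat \<Rightarrow> real) \<Rightarrow> bool" where
  "stable_eq k W \<mu> \<theta> \<longleftrightarrow> nonneg_vec k \<theta> \<and> feasible k W \<mu> \<theta> \<and>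
     (\<forall>i<k. \<not> (\<exists>t. 0 \<le> t \<and> t < \<theta> i \<and> util k W i (\<theta>(i := t)) \<ge> \<mu>))"

definition optimal_stable_eq :: "nat \<Rightarrow> (nat \<Rightarrow> nat \<Rightarrow> real) \<Rightarrow> real \<Rightarrow> (nat \<Rightarrow> real) \<Rightarrow> bool" where
  "optimal_stable_eq k W \<mu> \<theta> \<longleftrightarrow> stable_eq k W \<mu> \<theta> \<and>
     (\<forall>\<theta>'. stable_eq k W \<mu> \<theta>' \<longrightarrow> (\<Sum>i<k. \<theta> i) \<le> (\<Sum>i<k. \<theta>' i))"

definition lp_feasible :: "nat set \<Rightarrow> (nat \<Rightarrow> nat \<Rightarrow> real) \<Rightarrow> real \<Rightarrow> (nat \<Rightarrow> real) \<Rightarrow> bool" where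
  "lp_feasible J W \<mu> x \<longleftrightarrow> (\<forall>i\<in>J. (\<Sum>j\<in>J. W i j * x j) \<ge> \<mu>) \<and> (\<forall>j\<in>J. x j \<ge> 0)"

definition lp_optimal :: "nat set \<Rightarrow> (nat \<Rightarrow> nat \<Rightarrow> real) \<Rightarrow> real \<Rightarrow> (nat \<Rightarrow> real) \<Rightarrow> bool" where
  "lp_optimal J W \<mu> x \<longleftrightarrow> lp_feasible J W \<mu> x \<and>
     (\<forall>y. lp_feasible J W \<mu> y \<longrightarrow> (\<Sum>j\<in>J. x j) \<le> (\<Sum>j\<in>J. y j))"

end

theory Submission
  imports Defs
begin

text \<open>A player with positive weight in a stable equilibrium cannot lower it, so its constraint
  is tight. On the support \<open>J\<close> the equilibrium \<open>\<theta>\<close> therefore satisfies \<open>W\<^sub>J \<theta> = \<mu> 1\<close>, and since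
  \<open>W\<close> is symmetric, \<open>\<theta>/\<mu>\<close> is a feasible dual solution of the LP with the same objective value.
  By weak duality \<open>\<theta>\<close> is optimal.\<close>

lemma util_fun_upd:
  assumes "i < k"
  shows "util k W i (\<theta>(i := t)) = util k W i \<theta> + W i i * (t - \<theta> i)"
proof -
  have "util k W i (\<theta>(i := t)) = (\<Sum>j<k. W j i * \<theta> j + (if j = i then W i i * (t - \<theta> i) else 0))"
    unfolding util_def by (rule sum.cong) (auto simp: algebra_simps)
  also have "\<dots> = util k W i \<theta> + W i i * (t - \<theta> i)"
    using assms by (simp add: sum.distrib util_def)
  finally show ?thesis .
qed

lemma stable_eq_util_eq:
  assumes "stable_eq k W \<mu> \<theta>" and "i < k" and "\<theta> i > 0" and "W i i > 0"
  shows "util k W i \<theta> = \<mu>"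
proof (rule ccontr)
  assume "util k W i \<theta> \<noteq> \<mu>"
  with assms have slack: "util k W i \<theta> > \<mu>"
    unfolding stable_eq_def feasible_def by force
  define t where "t = max 0 (\<theta> i - (util k W i \<theta> - \<mu>) / W i i)"
  have "0 \<le> t" and "t < \<theta> i"
    using slack assms(3,4) unfolding t_def by auto
  moreover have "util k W i (\<theta>(i := t)) \<ge> \<mu>"
  proof (cases "t = 0")
    case True
    then have "\<theta> i \<le> (util k W i \<theta> - \<mu>) / W i i"
      unfolding t_def by (simp add: max_def split: if_splits)
    then have "W i i * \<theta> i \<le> util k W i \<theta> - \<mu>"
      using assms(4) by (simp add: field_simps)
    then show ?thesis using True util_fun_upd[OF assms(2)] by simp
  next
    case False
    then have "t = \<theta> i - (util k W i \<theta> - \<mu>) / W i i"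
      unfolding t_def by auto
    then show ?thesis using util_fun_upd[OF assms(2)] assms(4) by simp
  qed
  ultimately show False
    using assms(1,2) unfolding stable_eq_def by blast
qed

lemma util_eq_sum_support:
  assumes "\<forall>i<k. \<forall>j<k. W i j = W j i" and "i < k"
  shows "util k W i \<theta> = (\<Sum>j\<in>{..<k} - {j. j < k \<and> \<theta> j = 0}. W i j * \<theta> j)"
proof -
  have "util k W i \<theta> = (\<Sum>j<k. W i j * \<theta> j)"
    unfolding util_def using assms by (intro sum.cong) auto
  also have "\<dots> = (\<Sum>j\<in>{..<k} - {j. j < k \<and> \<theta> j = 0}. W i j * \<theta> j)"
    by (rule sum.mono_neutral_right) auto
  finally show ?thesis .
qed

lemma lp_optimal_if_tight_symmetric:
  assumes sym: "\<forall>i\<in>J. \<forall>j\<in>J. W i j = W j i" and "\<mu> > 0"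
    and tight: "\<forall>i\<in>J. (\<Sum>j\<in>J. W i j * x j) = \<mu>" and nonneg: "\<forall>j\<in>J. x j \<ge> 0"
  shows "lp_optimal J W \<mu> x"
  unfolding lp_optimal_def
proof (intro conjI allI impI)
  show "lp_feasible J W \<mu> x"
    unfolding lp_feasible_def using tight nonneg by simp
  fix y
  assume "lp_feasible J W \<mu> y"
  then have y_rows: "\<forall>i\<in>J. (\<Sum>j\<in>J. W i j * y j) \<ge> \<mu>"
    unfolding lp_feasible_def by blast
  have "(\<Sum>j\<in>J. x j) * \<mu> = (\<Sum>j\<in>J. x j * \<mu>)"
    by (simp add: sum_distrib_right)
  also have "\<dots> \<le> (\<Sum>j\<in>J. x j * (\<Sum>i\<in>J. W j i * y i))"
    using y_rows nonneg by (intro sum_mono mult_left_mono) auto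
  also have "\<dots> = (\<Sum>j\<in>J. \<Sum>i\<in>J. y i * (W j i * x j))"
    by (simp add: sum_distrib_left algebra_simps)
  also have "\<dots> = (\<Sum>i\<in>J. \<Sum>j\<in>J. y i * (W j i * x j))"
    by (rule sum.swap)
  also have "\<dots> = (\<Sum>i\<in>J. y i * (\<Sum>j\<in>J. W i j * x j))"
    using sym by (auto simp: sum_distrib_left intro!: sum.cong)
  also have "\<dots> = (\<Sum>i\<in>J. y i) * \<mu>"
    using tight by (simp add: sum_distrib_right)
  finally show "(\<Sum>j\<in>J. x j) \<le> (\<Sum>j\<in>J. y j)"
    using \<open>\<mu> > 0\<close> by simp
qed

theorem lemma2:
  fixes k :: nat and W :: "nat \<Rightarrow> nat \<Rightarrow> real" and \<mu> :: real and \<theta> :: "nat \<Rightarrow> real"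
  assumes entries: "\<forall>i<k. \<forall>j<k. 0 \<le> W i j \<and> W i j \<le> 1"
    and sym: "\<forall>i<k. \<forall>j<k. W i j = W j i"
    and diag: "\<forall>i<k. W i i = 1"
    and psd: "\<forall>v :: nat \<Rightarrow> real. (\<Sum>i<k. \<Sum>j<k. v i * W i j * v j) \<ge> 0"
    and mu: "\<mu> > 0"
    and opt: "optimal_stable_eq k W \<mu> \<theta>"
  shows "lp_optimal ({..<k} - {i. i < k \<and> \<theta> i = 0}) W \<mu> \<theta>"
proof -
  define J where "J = {..<k} - {i. i < k \<and> \<theta> i = 0}"
  have stable: "stable_eq k W \<mu> \<theta>"
    using opt unfolding optimal_stable_eq_def by blast
  have nonneg: "\<forall>j\<in>J. \<theta> j \<ge> 0"
    using stable unfolding stable_eq_def nonneg_vec_def J_def by blast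
  have tight: "\<forall>i\<in>J. (\<Sum>j\<in>J. W i j * \<theta> j) = \<mu>"
  proof
    fix i
    assume "i \<in> J"
    then have "i < k" and "\<theta> i > 0"
      using nonneg unfolding J_def by force+
    then show "(\<Sum>j\<in>J. W i j * \<theta> j) = \<mu>"
      using stable_eq_util_eq[OF stable] util_eq_sum_support[OF sym] diag
      unfolding J_def by simp
  qed
  have "\<forall>i\<in>J. \<forall>j\<in>J. W i j = W j i"
    using sym unfolding J_def by simp
  from lp_optimal_if_tight_symmetric[OF this mu tight nonneg]
  show ?thesis unfolding J_def .
qed

end
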